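(* Let $T$ be a bounded linear operator on a complex Hilbert space. If $T$ is coquasiposinormal and $T^n$ is quasiposinormal for some integer $n\ge1$, then $T^m$ is both quasiposinormal and coquasiposinormal for every integer $m\ge1$; that is, $\mathcal{N}(T^m)=\mathcal{N}(T^{*m})$ for every $m\ge1$.
   Context: $\mathcal{N}(A)$ denotes the kernel of $A$. An operator $A$ is quasiposinormal if $\mathcal{N}(A)\subseteq\mathcal{N}(A^* )$ (equivalently $\overline{\mathcal{R}(A)}\subseteq\overline{\mathcal{R}(A^* )}$), and coquasiposinormal if $\mathcal{N}(A^* )\subseteq\mathcal{N}(A)$. *)

theory Defs
  imports "HOL-Analysis.Analysis"
begin

class complex_vector = real_vector +
  fixes scaleC :: "complex \<Rightarrow> 'a \<Rightarrow> 'a"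
  assumes scaleC_add_right: "scaleC a (x + y) = scaleC a x + scaleC a y"
    and scaleC_add_left: "scaleC (a + b) x = scaleC a x + scaleC b x"
    and scaleC_scaleC: "scaleC a (scaleC b x) = scaleC (a * b) x"
    and scaleC_one: "scaleC 1 x = x"
    and scaleR_scaleC: "scaleR r x = scaleC (complex_of_real r) x"

class complex_inner = complex_vector + real_normed_vector +
  fixes cinner :: "'a \<Rightarrow> 'a \<Rightarrow> complex"
  assumes cinner_commute: "cinner x y = cnj (cinner y x)"
    and cinner_add_left: "cinner (x + y) z = cinner x z + cinner y z"
    and cinner_scaleC_left: "cinner (scaleC r x) y = cnj r * cinner x y"
    and cinner_nonneg: "Im (cinner x x) = 0 \<and> 0 \<le> Re (cinner x x)"
    and cinner_eq_zero_iff: "cinner x x = 0 \<longleftrightarrow> x = 0"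
    and norm_eq_sqrt_cinner: "norm x = sqrt (Re (cinner x x))"

class chilbert_space = complex_inner + complete_space

definition bounded_clinear :: "('a::complex_inner \<Rightarrow> 'b::complex_inner) \<Rightarrow> bool" where
  "bounded_clinear T \<longleftrightarrow> bounded_linear T \<and> (\<forall>c x. T (scaleC c x) = scaleC c (T x))"

text \<open>The Hilbert-space adjoint: the (unique, by Riesz) operator A with
  <T x, y> = <x, A y>.\<close>
definition cadjoint :: "('a::chilbert_space \<Rightarrow> 'a) \<Rightarrow> ('a \<Rightarrow> 'a)" where
  "cadjoint T = (SOME A. \<forall>x y. cinner (T x) y = cinner x (A y))"

definition kernel :: "('a \<Rightarrow> 'b::zero) \<Rightarrow> 'a set" where
  "kernel T = {x. T x = 0}"

definition quasiposinormal :: "('a::chilbert_space \<Rightarrow> 'a) \<Rightarrow> bool" where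
  "quasiposinormal A \<longleftrightarrow> kernel A \<subseteq> kernel (cadjoint A)"

definition coquasiposinormal :: "('a::chilbert_space \<Rightarrow> 'a) \<Rightarrow> bool" where
  "coquasiposinormal A \<longleftrightarrow> kernel (cadjoint A) \<subseteq> kernel A"

end

theory Submission
  imports Defs
begin

(* If A is an adjoint of S and ker A is contained in ker S, then ker A^k = ker A for all k >= 1:
   A (A v) = 0 gives S (A v) = 0, hence ||A v||^2 = <S (A v), v> = 0.
   For A = T* the hypothesis is coquasiposinormality, so ker T*^n = ker T*, and therefore
   ker T <= ker T^n <= ker T*^n = ker T*. Thus T and T* have the same kernel, and the same
   argument with the roles of T and T* exchanged gives ker T^k = ker T.
   The adjoint itself comes from the Riesz representation theorem, proved via the element of
   minimal norm of the closed convex set f^-1 {1}. *)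

lemma cinner_zero_left [simp]: "cinner 0 y = 0"
  using cinner_add_left [of 0 0 y] by simp

lemma cinner_zero_right [simp]: "cinner x 0 = 0"
  by (metis cinner_commute cinner_zero_left complex_cnj_zero)

lemma cinner_add_right: "cinner x (y + z) = cinner x y + cinner x z"
  by (metis cinner_add_left cinner_commute complex_cnj_add)

lemma cinner_minus_right: "cinner x (- y) = - cinner x y"
  using cinner_add_right [of x y "- y"] by (simp add: add_eq_0_iff)

lemma cinner_diff_left: "cinner (x - y) z = cinner x z - cinner y z"
  using cinner_add_left [of "x - y" y z] by simp

lemma cinner_scaleC_right: "cinner x (scaleC c y) = c * cinner x y"
  by (metis cinner_commute cinner_scaleC_left complex_cnj_cnj complex_cnj_mult)

lemma cinner_self: "cinner x x = complex_of_real ((norm x)\<^sup>2)"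
  using cinner_nonneg [of x] norm_eq_sqrt_cinner [of x] by (simp add: complex_eq_iff)

lemma power2_norm_eq_Re_cinner: "(norm x)\<^sup>2 = Re (cinner x x)"
  using cinner_nonneg [of x] by (simp add: norm_eq_sqrt_cinner)

lemma norm_add_square:
  "(norm (x + y))\<^sup>2 = (norm x)\<^sup>2 + (norm y)\<^sup>2 + 2 * Re (cinner x y)"
proof -
  have "cinner (x + y) (x + y) = cinner x x + cinner y y + (cinner x y + cnj (cinner x y))"
    by (simp add: cinner_add_left cinner_add_right cinner_commute [of y x])
  from arg_cong [OF this, of Re] show ?thesis
    by (simp add: cinner_self)
qed

lemma norm_diff_square:
  "(norm (x - y))\<^sup>2 = (norm x)\<^sup>2 + (norm y)\<^sup>2 - 2 * Re (cinner x y)"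
  using norm_add_square [of x "- y"] by (simp add: cinner_minus_right)

lemma norm_scaleC: "norm (scaleC c (x::'a::complex_inner)) = cmod c * norm x"
proof -
  have "(norm (scaleC c x))\<^sup>2 = Re (c * (cnj c * cinner x x))"
    by (simp only: power2_norm_eq_Re_cinner cinner_scaleC_left cinner_scaleC_right)
  also have "\<dots> = (cmod c * norm x)\<^sup>2"
    by (simp only: mult.assoc [symmetric] cinner_self complex_norm_square [symmetric]
        of_real_mult [symmetric] Re_complex_of_real power_mult_distrib)
  finally show ?thesis
    by (rule power2_eq_imp_eq) auto
qed

lemma Re_cinner_polarization: "Re (cinner x y) = ((norm (x + y))\<^sup>2 - (norm (x - y))\<^sup>2) / 4"
  by (simp add: norm_add_square norm_diff_square)

lemma continuous_on_cinner_left [continuous_intros]: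
  assumes "continuous_on S f"
  shows "continuous_on S (\<lambda>x. cinner (f x) y)"
proof -
  have "cinner (f x) y = Complex (Re (cinner (f x) y)) (- Re (cinner (f x) (scaleC \<i> y)))" for x
    by (simp add: cinner_scaleC_right complex_eq_iff)
  then show ?thesis
    unfolding Re_cinner_polarization by (simp only:) (auto intro!: continuous_intros assms)
qed

lemma parallelogram_law:
  "(norm (x - y))\<^sup>2 = 2 * (norm (x::'a::complex_inner))\<^sup>2 + 2 * (norm y)\<^sup>2 - (norm (x + y))\<^sup>2"
  by (simp add: norm_add_square norm_diff_square)

lemma closed_convex_has_min_norm:
  fixes C :: "'a::chilbert_space set"
  assumes "closed C" and "convex C" and "C \<noteq> {}"
  shows "\<exists>w\<in>C. \<forall>c\<in>C. norm w \<le> norm c"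
proof -
  define d where "d = Inf ((\<lambda>x. (norm x)\<^sup>2) ` C)"
  have bdd: "bdd_below ((\<lambda>x. (norm x)\<^sup>2) ` C)"
    by (rule bdd_belowI [of _ 0]) auto
  have d_le: "d \<le> (norm c)\<^sup>2" if "c \<in> C" for c
    unfolding d_def using bdd that by (simp add: cInf_lower)
  have "\<exists>x\<in>C. (norm x)\<^sup>2 < d + inverse (real (Suc k))" for k
    using cInf_less_iff [OF _ bdd, of "d + inverse (real (Suc k))"] \<open>C \<noteq> {}\<close>
    unfolding d_def by auto
  then obtain X where X_in: "\<And>k. X k \<in> C"
    and X_le: "\<And>k. (norm (X k))\<^sup>2 < d + inverse (real (Suc k))"
    by metis
  have norm_add_ge: "4 * d \<le> (norm (a + b))\<^sup>2" if "a \<in> C" "b \<in> C" for a b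
  proof -
    have "(1/2) *\<^sub>R a + (1/2) *\<^sub>R b \<in> C"
      using convexD [OF \<open>convex C\<close> that] by simp
    from d_le [OF this] show ?thesis
      by (simp add: scaleR_add_right [symmetric] power_divide)
  qed
  have dist_X: "(norm (X i - X j))\<^sup>2 < 4 * inverse (real (Suc N))"
    if "N \<le> i" "N \<le> j" for i j N
  proof -
    have "inverse (real (Suc i)) \<le> inverse (real (Suc N))"
      "inverse (real (Suc j)) \<le> inverse (real (Suc N))"
      using that by (simp_all add: le_imp_inverse_le)
    moreover have "4 * d \<le> (norm (X i + X j))\<^sup>2"
      using norm_add_ge X_in by blast
    ultimately show ?thesis
      using parallelogram_law [of "X i" "X j"] X_le [of i] X_le [of j] by linarith
  qed
  have "Cauchy X"
  proof (rule metric_CauchyI)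
    fix e :: real
    assume "0 < e"
    then obtain N where N: "inverse (real (Suc N)) < e\<^sup>2 / 4"
      using reals_Archimedean [of "e\<^sup>2 / 4"] by auto
    have "dist (X i) (X j) < e" if "N \<le> i" "N \<le> j" for i j
    proof (rule power2_less_imp_less)
      show "(dist (X i) (X j))\<^sup>2 < e\<^sup>2"
        using dist_X [OF that] N unfolding dist_norm by linarith
    qed (use \<open>0 < e\<close> in simp)
    then show "\<exists>N. \<forall>i\<ge>N. \<forall>j\<ge>N. dist (X i) (X j) < e"
      by blast
  qed
  then obtain w where lim: "X \<longlonglongrightarrow> w"
    using Cauchy_convergent_iff convergent_def by blast
  have "w \<in> C"
    using closed_sequentially [OF \<open>closed C\<close> X_in lim] .
  have "(norm w)\<^sup>2 \<le> d + 0"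
  proof (rule LIMSEQ_le)
    show "(\<lambda>k. (norm (X k))\<^sup>2) \<longlonglongrightarrow> (norm w)\<^sup>2"
      using lim by (intro tendsto_power tendsto_norm)
    show "(\<lambda>k. d + inverse (real (Suc k))) \<longlonglongrightarrow> d + 0"
      by (intro tendsto_intros LIMSEQ_inverse_real_of_nat)
    show "\<exists>N. \<forall>k\<ge>N. (norm (X k))\<^sup>2 \<le> d + inverse (real (Suc k))"
      using X_le less_imp_le by blast
  qed
  then have "norm w \<le> norm c" if "c \<in> C" for c
    using d_le [OF that] by (metis add_0_right order_trans norm_ge_zero power2_le_imp_le)
  with \<open>w \<in> C\<close> show ?thesis
    by blast
qed

lemma cinner_eq_zero_if_norm_minimal:
  assumes "\<And>t. norm w \<le> norm (w + scaleC t u)"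
  shows "cinner w u = 0"
proof (cases "u = 0")
  case True
  then show ?thesis
    by simp
next
  case False
  define a where "a = cinner w u"
  define q where "q = (norm u)\<^sup>2"
  define t where "t = - cnj a / complex_of_real q"
  have "0 < q"
    using False by (simp add: q_def)
  have cmod_t: "cmod t = cmod a / q"
    using \<open>0 < q\<close> by (simp add: t_def norm_divide)
  have Re_ta: "Re (t * a) = - (cmod a)\<^sup>2 / q"
    unfolding cmod_power2 by (simp add: t_def power2_eq_square add_divide_distrib diff_divide_distrib)
  have "(norm w)\<^sup>2 \<le> (norm (w + scaleC t u))\<^sup>2"
    using assms [of t] by (simp add: power_mono)
  also have "\<dots> = (norm w)\<^sup>2 + (cmod t)\<^sup>2 * q + 2 * Re (t * a)"
    by (simp add: norm_add_square norm_scaleC cinner_scaleC_right power_mult_distrib a_def q_def)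
  also have "\<dots> = (norm w)\<^sup>2 - (cmod a)\<^sup>2 / q"
    using \<open>0 < q\<close> unfolding cmod_t Re_ta by (simp add: power2_eq_square field_simps)
  finally have "(cmod a)\<^sup>2 / q \<le> 0"
    by simp
  with \<open>0 < q\<close> show ?thesis
    by (simp add: a_def divide_le_0_iff)
qed

lemma riesz_representation_conj:
  fixes f :: "'a::chilbert_space \<Rightarrow> complex"
  assumes add: "\<And>x y. f (x + y) = f x + f y"
    and scale: "\<And>c x. f (scaleC c x) = cnj c * f x"
    and cont: "continuous_on UNIV f"
  shows "\<exists>z. \<forall>x. f x = cinner x z"
proof (cases "\<forall>x. f x = 0")
  case True
  then show ?thesis
    by (intro exI [of _ 0]) simp
next
  case False
  then obtain x0 where "f x0 \<noteq> 0"
    by blast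
  have f_0: "f 0 = 0"
    using add [of 0 0] by simp
  have f_scaleR: "f (r *\<^sub>R x) = complex_of_real r * f x" for r x
    using scale [of "complex_of_real r" x] by (simp add: scaleR_scaleC)
  define C where "C = f -` {1}"
  have "closed C"
    unfolding C_def by (intro closed_vimage cont closed_singleton)
  moreover have "convex C"
    unfolding C_def convex_def by (auto simp: add f_scaleR simp flip: of_real_add)
  moreover have "scaleC (cnj (1 / f x0)) x0 \<in> C"
    using \<open>f x0 \<noteq> 0\<close> by (simp add: C_def scale)
  ultimately obtain w where "w \<in> C" and w_min: "\<forall>c\<in>C. norm w \<le> norm c"
    using closed_convex_has_min_norm by blast
  then have "f w = 1"
    by (simp add: C_def)
  have orth: "cinner w u = 0" if "f u = 0" for u
  proof (rule cinner_eq_zero_if_norm_minimal)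
    show "norm w \<le> norm (w + scaleC t u)" for t
      using w_min \<open>f w = 1\<close> that by (simp add: C_def add scale)
  qed
  have "w \<noteq> 0"
    using \<open>f w = 1\<close> f_0 by auto
  have "f x = cinner x (scaleC (1 / complex_of_real ((norm w)\<^sup>2)) w)" for x
  proof -
    define u where "u = x - scaleC (cnj (f x)) w"
    have x_eq: "x = u + scaleC (cnj (f x)) w"
      by (simp add: u_def)
    then have "f u = 0"
      using add [of u "scaleC (cnj (f x)) w"] \<open>f w = 1\<close> by (simp add: scale)
    have "cinner w x = cnj (f x) * cinner w w"
      by (subst x_eq) (simp add: cinner_add_right cinner_scaleC_right orth [OF \<open>f u = 0\<close>])
    then have "cinner x w = f x * complex_of_real ((norm w)\<^sup>2)"
      by (metis cinner_commute cinner_self complex_cnj_cnj complex_cnj_complex_of_real complex_cnj_mult)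
    then show ?thesis
      using \<open>w \<noteq> 0\<close> by (simp add: cinner_scaleC_right)
  qed
  then show ?thesis
    by blast
qed

lemma cinner_ext:
  assumes "\<And>x. cinner x a = cinner x b"
  shows "a = b"
proof -
  have "cinner a x = cinner b x" for x
    using assms [of x] by (metis cinner_commute)
  then have "cinner (a - b) (a - b) = 0"
    by (simp add: cinner_diff_left)
  then show ?thesis
    by (simp add: cinner_eq_zero_iff)
qed

definition is_adjoint :: "('a::complex_inner \<Rightarrow> 'b::complex_inner) \<Rightarrow> ('b \<Rightarrow> 'a) \<Rightarrow> bool" where
  "is_adjoint T A \<longleftrightarrow> (\<forall>x y. cinner (T x) y = cinner x (A y))"

lemma is_adjoint_unique:
  assumes "is_adjoint T A" and "is_adjoint T B"
  shows "A = B"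
proof
  fix y
  show "A y = B y"
    using assms unfolding is_adjoint_def by (metis cinner_ext)
qed

lemma cadjoint_eqI:
  assumes "is_adjoint T A"
  shows "cadjoint T = A"
proof -
  have "cadjoint T = (SOME A. is_adjoint T A)"
    by (simp add: cadjoint_def is_adjoint_def)
  then have "is_adjoint T (cadjoint T)"
    using someI [of "is_adjoint T", OF assms] by simp
  then show ?thesis
    using assms by (rule is_adjoint_unique)
qed

lemma is_adjoint_cadjoint:
  fixes T :: "'a::chilbert_space \<Rightarrow> 'a"
  assumes "bounded_clinear T"
  shows "is_adjoint T (cadjoint T)"
proof -
  have "linear T" and T_scaleC: "\<And>c x. T (scaleC c x) = scaleC c (T x)"
    and "continuous_on UNIV T"
    using assms by (auto simp: bounded_clinear_def bounded_linear.linear linear_continuous_on)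
  have "\<exists>z. \<forall>x. cinner (T x) y = cinner x z" for y
  proof (rule riesz_representation_conj)
    show "cinner (T (x + x')) y = cinner (T x) y + cinner (T x') y" for x x'
      using \<open>linear T\<close> by (simp add: linear_add cinner_add_left)
    show "cinner (T (scaleC c x)) y = cnj c * cinner (T x) y" for c x
      by (simp add: T_scaleC cinner_scaleC_left)
    show "continuous_on UNIV (\<lambda>x. cinner (T x) y)"
      by (intro continuous_intros \<open>continuous_on UNIV T\<close>)
  qed
  then obtain A where "\<forall>y x. cinner (T x) y = cinner x (A y)"
    by metis
  then have "is_adjoint T A"
    by (simp add: is_adjoint_def)
  moreover from this have "cadjoint T = A"
    by (rule cadjoint_eqI)
  ultimately show ?thesis
    by simp
qed

lemma is_adjoint_swap:
  assumes "is_adjoint T A"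
  shows "is_adjoint A T"
  using assms unfolding is_adjoint_def by (metis cinner_commute)

lemma is_adjoint_funpow:
  fixes T :: "'a::complex_inner \<Rightarrow> 'a"
  assumes "is_adjoint T A"
  shows "is_adjoint (T ^^ m) (A ^^ m)"
proof (induction m)
  case 0
  then show ?case
    by (simp add: is_adjoint_def)
next
  case (Suc m)
  show ?case
    unfolding is_adjoint_def
  proof (intro allI)
    fix x y
    have "cinner ((T ^^ Suc m) x) y = cinner ((T ^^ m) (T x)) y"
      by (simp add: funpow_Suc_right del: funpow.simps)
    also have "\<dots> = cinner (T x) ((A ^^ m) y)"
      using Suc.IH by (simp add: is_adjoint_def)
    also have "\<dots> = cinner x ((A ^^ Suc m) y)"
      using assms by (simp add: is_adjoint_def)
    finally show "cinner ((T ^^ Suc m) x) y = cinner x ((A ^^ Suc m) y)" .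
  qed
qed

lemma cadjoint_funpow:
  fixes T :: "'a::chilbert_space \<Rightarrow> 'a"
  assumes "bounded_clinear T"
  shows "cadjoint (T ^^ m) = cadjoint T ^^ m"
  using is_adjoint_funpow [OF is_adjoint_cadjoint [OF assms]] by (rule cadjoint_eqI)

lemma is_adjoint_map_zero:
  assumes "is_adjoint T A"
  shows "A 0 = 0"
proof -
  have "cinner (A 0) (A 0) = cinner (T (A 0)) 0"
    using assms unfolding is_adjoint_def by metis
  then show ?thesis
    by (simp add: cinner_eq_zero_iff)
qed

lemma kernel_subset_kernel_funpow:
  fixes f :: "'a::zero \<Rightarrow> 'a"
  assumes "f 0 = 0" and "0 < k"
  shows "kernel f \<subseteq> kernel (f ^^ k)"
  using \<open>0 < k\<close>
proof (induction k rule: nat_induct_non_zero)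
  case 1
  then show ?case
    by simp
next
  case (Suc k)
  with assms show ?case
    by (auto simp: kernel_def)
qed

lemma kernel_square_subset_kernel:
  fixes B :: "'a::complex_inner \<Rightarrow> 'a"
  assumes "is_adjoint S B" and "kernel B \<subseteq> kernel S" and "B (B v) = 0"
  shows "B v = 0"
proof -
  have "S (B v) = 0"
    using assms by (auto simp: kernel_def)
  then have "cinner (B v) (B v) = 0"
    using \<open>is_adjoint S B\<close> unfolding is_adjoint_def by (metis cinner_zero_left)
  then show ?thesis
    by (simp add: cinner_eq_zero_iff)
qed

lemma kernel_funpow_eq:
  fixes B :: "'a::complex_inner \<Rightarrow> 'a"
  assumes "is_adjoint S B" and "kernel B \<subseteq> kernel S" and "0 < k"
  shows "kernel (B ^^ k) = kernel B"
  using \<open>0 < k\<close>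
proof (induction k rule: nat_induct_non_zero)
  case 1
  then show ?case
    by simp
next
  case (Suc k)
  have "(B ^^ Suc k) x = 0 \<longleftrightarrow> B x = 0" for x
  proof -
    have "(B ^^ Suc k) x = 0 \<longleftrightarrow> B (B x) = 0"
      using Suc.IH by (auto simp: kernel_def funpow_Suc_right simp del: funpow.simps)
    also have "\<dots> \<longleftrightarrow> B x = 0"
      using kernel_square_subset_kernel [OF assms(1,2)] is_adjoint_map_zero [OF assms(1)] by auto
    finally show ?thesis .
  qed
  then show ?case
    by (simp add: kernel_def)
qed

theorem theorem5p6:
  fixes T :: "'a::chilbert_space \<Rightarrow> 'a" and n :: nat
  assumes "bounded_clinear T"
    and "coquasiposinormal T"
    and "n \<ge> 1"
    and "quasiposinormal (T ^^ n)"
  shows "\<forall>m\<ge>1. quasiposinormal (T ^^ m) \<and> coquasiposinormal (T ^^ m)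
                \<and> kernel (T ^^ m) = kernel (cadjoint T ^^ m)"
proof -
  define A where "A = cadjoint T"
  have adj: "is_adjoint T A"
    unfolding A_def using assms(1) by (rule is_adjoint_cadjoint)
  have cadjoint_pow: "cadjoint (T ^^ m) = A ^^ m" for m
    unfolding A_def using assms(1) by (rule cadjoint_funpow)
  have "kernel A \<subseteq> kernel T"
    using assms(2) by (simp add: coquasiposinormal_def A_def)
  then have kernel_A_pow: "kernel (A ^^ m) = kernel A" if "m \<ge> 1" for m
    using kernel_funpow_eq [OF adj] that by simp
  have "kernel T \<subseteq> kernel (T ^^ n)"
    using is_adjoint_map_zero [OF is_adjoint_swap [OF adj]] assms(3)
    by (simp add: kernel_subset_kernel_funpow)
  also have "\<dots> \<subseteq> kernel A"
    using assms(3,4) kernel_A_pow by (simp add: quasiposinormal_def cadjoint_pow)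
  finally have kernel_T_pow: "kernel (T ^^ m) = kernel A" if "m \<ge> 1" for m
    using kernel_funpow_eq [OF is_adjoint_swap [OF adj]] \<open>kernel A \<subseteq> kernel T\<close> that by auto
  show ?thesis
    using kernel_A_pow kernel_T_pow
    by (simp add: quasiposinormal_def coquasiposinormal_def cadjoint_pow A_def)
qed

end
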